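(* Let $n\ge 1$, let $G=P_n$ be the path with vertex set $\{1,\dots,n\}$ and edges $\{i,i+1\}$ for $1\le i<n$, and let $C\subseteq V(G)$ be such that no vertex of $V(G)\setminus C$ is isolated. Let $m_1=n-\delta_1+1$, where $\delta_1=\min_{v\in V(G)}|N\langle v\rangle|$. If $\{1,n\}\subseteq C$ or $C$ is a good configuration for $G$, then $\gamma_{\rm gr}(G;C)=m_1$; otherwise $\gamma_{\rm gr}(G;C)=m_1-1$.
   Context: $N\langle v\rangle = N[v]$ (closed neighborhood) if $v\in C$ and $N\langle v\rangle=N(v)$ (open neighborhood) if $v\notin C$. A sequence $(v_1,\dots,v_k)$ of distinct vertices is legal if $N\langle v_i\rangle\setminus\bigcup_{j<i}N\langle v_j\rangle\neq\emptyset$ for all $i\ge 2$, and dominating if $\bigcup_j N\langle v_j\rangle=V$; $\gamma_{\rm gr}(G;C)$ is the maximum length of a legal dominating sequence. Good configuration (defined for a path with vertices $a_1,\dots,a_n$ in order, applied to $C\cap\{a_1,\dots,a_n\}$; isolated vertices outside $C$ are allowed in this definition): $C$ is a good configuration for the path if (i) $n=1$ and $a_1\in C$; or (ii) $n=2$ and $\{a_1,a_2\}\not\subseteq C$; or (iii) $n\ge 3$ and either $a_1\notin C$ and $C$ is a good configuration for the subpath $(a_3,\dots,a_n)$, or $a_n\notin C$ and $C$ is a good configuration for the subpath $(a_1,\dots,a_{n-2})$. *)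

theory Defs
  imports Main
begin

definition path_verts :: "nat \<Rightarrow> nat set" where
  "path_verts n = {1..n}"

definition path_adj :: "nat \<Rightarrow> nat \<Rightarrow> nat \<Rightarrow> bool" where
  "path_adj n u v \<longleftrightarrow> u \<in> {1..n} \<and> v \<in> {1..n} \<and> (u = v + 1 \<or> v = u + 1)"

definition open_nbhd :: "nat \<Rightarrow> nat \<Rightarrow> nat set" where
  "open_nbhd n v = {u. path_adj n v u}"

definition cnbhd :: "nat \<Rightarrow> nat set \<Rightarrow> nat \<Rightarrow> nat set" where
  "cnbhd n C v = (if v \<in> C then insert v (open_nbhd n v) else open_nbhd n v)"

definition legal_seq :: "nat \<Rightarrow> nat set \<Rightarrow> nat list \<Rightarrow> bool" where
  "legal_seq n C vs \<longleftrightarrow> distinct vs \<and> set vs \<subseteq> path_verts n \<and>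
     (\<forall>i. 1 \<le> i \<and> i < length vs \<longrightarrow>
        cnbhd n C (vs ! i) - (\<Union>j<i. cnbhd n C (vs ! j)) \<noteq> {})"

definition dominating_seq :: "nat \<Rightarrow> nat set \<Rightarrow> nat list \<Rightarrow> bool" where
  "dominating_seq n C vs \<longleftrightarrow> (\<Union>v\<in>set vs. cnbhd n C v) = path_verts n"

definition gamma_gr :: "nat \<Rightarrow> nat set \<Rightarrow> nat" where
  "gamma_gr n C = Max {length vs | vs. legal_seq n C vs \<and> dominating_seq n C vs}"

text \<open>Good configuration for the subpath with vertices a, a+1, ..., a+len-1.\<close>
fun good_config :: "nat set \<Rightarrow> nat \<Rightarrow> nat \<Rightarrow> bool" where
  "good_config C a 0 = False"
| "good_config C a (Suc 0) = (a \<in> C)"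
| "good_config C a (Suc (Suc 0)) = (\<not> {a, a + 1} \<subseteq> C)"
| "good_config C a (Suc (Suc (Suc k))) =
     ((a \<notin> C \<and> good_config C (a + 2) (Suc k)) \<or>
      (a + k + 2 \<notin> C \<and> good_config C a (Suc k)))"

end

theory Submission
  imports Defs
begin

text \<open>
  Every vertex of a legal sequence after the first footprints at least one new vertex, and the
  first one footprints at least \<open>\<delta>\<^sub>1\<close> vertices, so \<open>\<gamma>\<^sub>g\<^sub>r \<le> n + 1 - \<delta>\<^sub>1\<close>.
  Conversely \<open>1, \<dots>, n - 1\<close> is legal (vertex \<open>i\<close> footprints \<open>i + 1\<close>) and extends
  greedily to a dominating sequence, so \<open>\<gamma>\<^sub>g\<^sub>r \<ge> n - 1\<close>. If \<open>{1, n} \<subseteq> C\<close> and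
  \<open>n \<ge> 2\<close>, then \<open>\<delta>\<^sub>1 = 2\<close> and the bounds meet; otherwise \<open>\<delta>\<^sub>1 = 1\<close> and the question
  is whether all \<open>n\<close> vertices can be put in a legal order. In such an order, the vertex
  footprinted only by the last vertex is an endpoint outside \<open>C\<close> and the last vertex is its
  neighbour; deleting both leaves a legal order of the path shortened by two at that end, and
  conversely a legal order of the shortened path extends by putting the endpoint first and its
  neighbour last. This is exactly the recursion defining good configurations.
\<close>

section \<open>Legal sequences relative to a dominated set\<close>

text \<open>\<open>S\<close> is the set already dominated before \<open>vs\<close> starts.\<close>

fun legal_from :: "('a \<Rightarrow> 'b set) \<Rightarrow> 'b set \<Rightarrow> 'a list \<Rightarrow> bool" where
  "legal_from N S [] = True"
| "legal_from N S (v # vs) \<longleftrightarrow> \<not> N v \<subseteq> S \<and> legal_from N (S \<union> N v) vs"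

lemma legal_from_append:
  "legal_from N S (xs @ ys) \<longleftrightarrow> legal_from N S xs \<and> legal_from N (S \<union> \<Union>(N ` set xs)) ys"
  by (induction xs arbitrary: S) (auto simp: Un_assoc)

lemma legal_from_conv_nth:
  "legal_from N S xs \<longleftrightarrow> (\<forall>i<length xs. N (xs ! i) - (S \<union> (\<Union>j<i. N (xs ! j))) \<noteq> {})"
proof (induction xs arbitrary: S)
  case (Cons v xs)
  have "(\<Union>j<Suc i. N ((v # xs) ! j)) = N v \<union> (\<Union>j<i. N (xs ! j))" for i
    by (auto simp: lessThan_Suc_eq_insert_0)
  then show ?case
    by (simp add: Cons.IH All_less_Suc2 Un_assoc del: UN_simps)
qed simp

lemma legal_from_distinct: "legal_from N S xs \<Longrightarrow> distinct xs"
  by (induction xs arbitrary: S) (auto simp: legal_from_append dest!: split_list)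

lemma legal_from_cong:
  "(\<And>v. v \<in> set xs \<Longrightarrow> N v = N' v) \<Longrightarrow> legal_from N S xs = legal_from N' S xs"
  by (induction xs arbitrary: S) auto

lemma legal_from_card:
  assumes "legal_from N S xs" "finite S" "\<And>v. v \<in> set xs \<Longrightarrow> finite (N v)"
  shows "card S + length xs \<le> card (S \<union> \<Union>(N ` set xs))"
  using assms
proof (induction xs arbitrary: S)
  case (Cons v xs)
  have "card S < card (S \<union> N v)"
    using Cons.prems by (intro psubset_card_mono) auto
  moreover have "card (S \<union> N v) + length xs \<le> card (S \<union> N v \<union> \<Union>(N ` set xs))"
    using Cons.IH[of "S \<union> N v"] Cons.prems by auto
  ultimately show ?case by (simp add: Un_assoc)
qed simp

lemma legal_from_lift:
  assumes "legal_from N' S' xs" "\<And>v. v \<in> set xs \<Longrightarrow> N v \<inter> I = N' v" "S \<inter> I \<subseteq> S'"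
  shows "legal_from N S xs"
  using assms
proof (induction xs arbitrary: S S')
  case (Cons v xs)
  have "\<not> N v \<subseteq> S" using Cons.prems by auto
  moreover have "legal_from N (S \<union> N v) xs"
    using Cons.IH[of "S' \<union> N' v" "S \<union> N v"] Cons.prems by auto
  ultimately show ?case by simp
qed simp

lemma legal_from_restrict:
  assumes "legal_from N S xs" "\<And>v. v \<in> set xs \<Longrightarrow> N v \<subseteq> I \<union> S \<and> N' v = N v \<inter> I"
  shows "legal_from N' (S \<inter> I) xs"
  using assms
proof (induction xs arbitrary: S)
  case (Cons v xs)
  have "\<not> N' v \<subseteq> S \<inter> I" using Cons.prems by auto
  moreover have "(S \<union> N v) \<inter> I = S \<inter> I \<union> N' v" using Cons.prems by auto
  ultimately show ?case using Cons.IH[of "S \<union> N v"] Cons.prems by auto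
qed simp

lemma legal_from_add_pendant:
  assumes "legal_from N' {} vs" "N e = {f}" "e \<in> N f" "e \<noteq> f" "f \<notin> I"
    and "\<And>v. v \<in> set vs \<Longrightarrow> N v \<inter> I = N' v \<and> e \<notin> N v"
  shows "legal_from N {} (e # vs @ [f])"
proof -
  have "legal_from N {f} vs"
    using assms by (intro legal_from_lift[of N' "{}" vs N I]) auto
  then show ?thesis using assms by (auto simp: legal_from_append)
qed

lemma legal_from_delete_pendant:
  assumes "legal_from N {} (p @ e # q)" "N e = {f}" "f \<notin> I"
    and "\<And>v. v \<in> set (p @ q) \<Longrightarrow> N v \<subseteq> insert f I \<and> N' v = N v \<inter> I"
  shows "legal_from N' {} (p @ q)"
proof -
  let ?S = "\<Union>(N ` set p)"
  have p: "legal_from N {} p" and f: "f \<notin> ?S" and q: "legal_from N (?S \<union> {f}) q"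
    using assms(1,2) by (auto simp: legal_from_append)
  have "legal_from N' ({} \<inter> I) p"
    using p f assms(4) by (intro legal_from_restrict) auto
  moreover have "legal_from N' ((?S \<union> {f}) \<inter> I) q"
    using q assms(4) by (intro legal_from_restrict) auto
  moreover have "(?S \<union> {f}) \<inter> I = \<Union>(N' ` set p)"
    using f assms(3,4) by auto
  ultimately show ?thesis by (simp add: legal_from_append)
qed

section \<open>Legal orderings of a subpath and good configurations\<close>

text \<open>\<open>N\<langle>v\<rangle>\<close> in the subpath \<open>a, \<dots>, b\<close>; meaningful only for \<open>v \<in> {a..b}\<close>.\<close>

definition seg_nbhd :: "nat set \<Rightarrow> nat \<Rightarrow> nat \<Rightarrow> nat \<Rightarrow> nat set" where
  "seg_nbhd C a b v = {u. a \<le> u \<and> u \<le> b \<and> (u = v + 1 \<or> v = u + 1 \<or> (u = v \<and> v \<in> C))}"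

lemma seg_nbhd_subset: "seg_nbhd C a b v \<subseteq> {a..b}"
  by (auto simp: seg_nbhd_def)

lemma seg_nbhd_restrict:
  "a \<le> a' \<Longrightarrow> b' \<le> b \<Longrightarrow> seg_nbhd C a' b' v = seg_nbhd C a b v \<inter> {a'..b'}"
  by (auto simp: seg_nbhd_def)

lemma cnbhd_eq_seg_nbhd:
  "C \<subseteq> {1..n} \<Longrightarrow> v \<in> {1..n} \<Longrightarrow> cnbhd n C v = seg_nbhd C 1 n v"
  by (auto simp: cnbhd_def open_nbhd_def path_adj_def seg_nbhd_def)

definition legal_ordering :: "nat set \<Rightarrow> nat \<Rightarrow> nat \<Rightarrow> nat list \<Rightarrow> bool" where
  "legal_ordering C a b vs \<longleftrightarrow> set vs = {a..b} \<and> legal_from (seg_nbhd C a b) {} vs"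

lemma legal_ordering_distinct: "legal_ordering C a b vs \<Longrightarrow> distinct vs"
  by (auto simp: legal_ordering_def intro: legal_from_distinct)

lemma legal_ordering_extend_left:
  assumes "legal_ordering C (a + 2) b vs" "a \<notin> C" "a + 2 \<le> b"
  shows "legal_ordering C a b (a # vs @ [a + 1])"
proof -
  have "legal_from (seg_nbhd C a b) {} (a # vs @ [a + 1])"
  proof (rule legal_from_add_pendant[where N' = "seg_nbhd C (a + 2) b" and I = "{a + 2..b}"])
    show "legal_from (seg_nbhd C (a + 2) b) {} vs" using assms(1) by (simp add: legal_ordering_def)
    show "seg_nbhd C a b a = {a + 1}" using assms(2,3) by (auto simp: seg_nbhd_def)
    fix v assume "v \<in> set vs"
    then have "a + 2 \<le> v" using assms(1) by (auto simp: legal_ordering_def)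
    then show "seg_nbhd C a b v \<inter> {a + 2..b} = seg_nbhd C (a + 2) b v \<and> a \<notin> seg_nbhd C a b v"
      by (auto simp: seg_nbhd_restrict[of a] seg_nbhd_def)
  qed (use assms(3) in \<open>auto simp: seg_nbhd_def\<close>)
  moreover have "{a..b} = insert a (insert (a + 1) {a + 2..b})" using assms(3) by auto
  ultimately show ?thesis using assms(1) by (simp add: legal_ordering_def)
qed

lemma legal_ordering_extend_right:
  assumes "legal_ordering C a (b - 2) vs" "b \<notin> C" "a + 2 \<le> b"
  shows "legal_ordering C a b (b # vs @ [b - 1])"
proof -
  have "legal_from (seg_nbhd C a b) {} (b # vs @ [b - 1])"
  proof (rule legal_from_add_pendant[where N' = "seg_nbhd C a (b - 2)" and I = "{a..b - 2}"])
    show "legal_from (seg_nbhd C a (b - 2)) {} vs" using assms(1) by (simp add: legal_ordering_def)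
    show "seg_nbhd C a b b = {b - 1}" using assms(2,3) by (auto simp: seg_nbhd_def)
    fix v assume "v \<in> set vs"
    then have "v + 2 \<le> b" using assms(1,3) by (auto simp: legal_ordering_def)
    then show "seg_nbhd C a b v \<inter> {a..b - 2} = seg_nbhd C a (b - 2) v \<and> b \<notin> seg_nbhd C a b v"
      by (auto simp: seg_nbhd_restrict[of a a "b - 2" b] seg_nbhd_def)
  qed (use assms(3) in \<open>auto simp: seg_nbhd_def\<close>)
  moreover have "{a..b} = insert b (insert (b - 1) {a..b - 2})" using assms(3) by auto
  ultimately show ?thesis using assms(1) by (simp add: legal_ordering_def)
qed

lemma legal_ordering_peel_left:
  assumes "legal_ordering C a b (ws @ [a + 1])" "a \<notin> C" "a + 2 \<le> b"
  shows "\<exists>vs. legal_ordering C (a + 2) b vs"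
proof -
  let ?N = "seg_nbhd C a b"
  have distinct: "distinct (ws @ [a + 1])" and set: "set (ws @ [a + 1]) = {a..b}"
    using assms(1) legal_ordering_distinct unfolding legal_ordering_def by blast+
  have "a \<in> set (ws @ [a + 1])" unfolding set using assms(3) by simp
  then have "a \<in> set ws" by simp
  then obtain p q where ws: "ws = p @ a # q" by (meson split_list)
  have set_pq: "set (p @ q) = {a + 2..b}"
  proof -
    have "set (p @ q) = set (ws @ [a + 1]) - {a, a + 1}" using distinct ws by auto
    also have "\<dots> = {a + 2..b}" unfolding set by auto
    finally show ?thesis .
  qed
  have "legal_from (seg_nbhd C (a + 2) b) {} (p @ q)"
  proof (rule legal_from_delete_pendant[where f = "a + 1" and I = "{a + 2..b}"])
    show "legal_from ?N {} (p @ a # q)"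
      using assms(1) ws by (simp add: legal_ordering_def legal_from_append)
    show "?N a = {a + 1}" using assms(2,3) by (auto simp: seg_nbhd_def)
    fix v assume "v \<in> set (p @ q)"
    then have "a + 2 \<le> v" using set_pq by auto
    then show "?N v \<subseteq> insert (a + 1) {a + 2..b} \<and> seg_nbhd C (a + 2) b v = ?N v \<inter> {a + 2..b}"
      by (auto simp: seg_nbhd_restrict[of a] seg_nbhd_def)
  qed simp
  then have "legal_ordering C (a + 2) b (p @ q)" using set_pq by (simp add: legal_ordering_def)
  then show ?thesis ..
qed

lemma legal_ordering_peel_right:
  assumes "legal_ordering C a b (ws @ [b - 1])" "b \<notin> C" "a + 2 \<le> b"
  shows "\<exists>vs. legal_ordering C a (b - 2) vs"
proof -
  let ?N = "seg_nbhd C a b"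
  have distinct: "distinct (ws @ [b - 1])" and set: "set (ws @ [b - 1]) = {a..b}"
    using assms(1) legal_ordering_distinct unfolding legal_ordering_def by blast+
  have "b \<in> set (ws @ [b - 1])" unfolding set using assms(3) by simp
  then have "b \<in> set ws" using assms(3) by auto
  then obtain p q where ws: "ws = p @ b # q" by (meson split_list)
  have set_pq: "set (p @ q) = {a..b - 2}"
  proof -
    have "set (p @ q) = set (ws @ [b - 1]) - {b, b - 1}" using distinct ws by auto
    also have "\<dots> = {a..b - 2}" unfolding set using assms(3) by auto
    finally show ?thesis .
  qed
  have "legal_from (seg_nbhd C a (b - 2)) {} (p @ q)"
  proof (rule legal_from_delete_pendant[where f = "b - 1" and I = "{a..b - 2}"])
    show "legal_from ?N {} (p @ b # q)"
      using assms(1) ws by (simp add: legal_ordering_def legal_from_append)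
    show "?N b = {b - 1}" using assms(2,3) by (auto simp: seg_nbhd_def)
    fix v assume "v \<in> set (p @ q)"
    then have "v \<le> b - 2" using set_pq by auto
    then have "v + 2 \<le> b" using assms(3) by linarith
    then show "?N v \<subseteq> insert (b - 1) {a..b - 2} \<and> seg_nbhd C a (b - 2) v = ?N v \<inter> {a..b - 2}"
      by (auto simp: seg_nbhd_restrict[of a a "b - 2" b] seg_nbhd_def)
  qed (use assms(3) in auto)
  then have "legal_ordering C a (b - 2) (p @ q)" using set_pq by (simp add: legal_ordering_def)
  then show ?thesis ..
qed

text \<open>
  The vertex footprinted only by the last vertex \<open>w\<close> has no other dominator, so it lies
  outside \<open>C\<close> and is an endpoint whose only neighbour is \<open>w\<close>.
\<close>

lemma legal_ordering_last:
  assumes "legal_ordering C a b (ws @ [w])" "a < b"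
  shows "(a \<notin> C \<and> w = a + 1) \<or> (b \<notin> C \<and> w + 1 = b)"
proof -
  let ?N = "seg_nbhd C a b"
  have "\<not> ?N w \<subseteq> \<Union>(?N ` set ws)"
    using assms(1) by (simp add: legal_ordering_def legal_from_append)
  then obtain x where x: "x \<in> ?N w" and x_private: "\<And>u. u \<in> set ws \<Longrightarrow> x \<notin> ?N u"
    by blast
  have "distinct (ws @ [w])" and set: "set (ws @ [w]) = {a..b}"
    using assms(1) legal_ordering_distinct unfolding legal_ordering_def by blast+
  then have only_w: "u = w" if "u \<in> {a..b}" "x \<in> ?N u" for u
    using x_private that by (auto simp flip: set)
  have x_seg: "x \<in> {a..b}" using x seg_nbhd_subset by blast
  have "x \<notin> C"
  proof
    assume "x \<in> C"
    then have "x = w" using only_w x_seg by (auto simp: seg_nbhd_def)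
    define y where "y = (if x < b then x + 1 else x - 1)"
    have "y \<in> {a..b}" "x \<in> ?N y" "y \<noteq> x"
      using x_seg assms(2) by (auto simp: y_def seg_nbhd_def)
    then show False using only_w \<open>x = w\<close> by blast
  qed
  then have "w = x + 1 \<or> w + 1 = x" using x by (auto simp: seg_nbhd_def)
  then show ?thesis
  proof
    assume w: "w = x + 1"
    have "x = a"
    proof (rule ccontr)
      assume "x \<noteq> a"
      then have "x - 1 \<in> {a..b}" "x \<in> ?N (x - 1)" using x_seg by (auto simp: seg_nbhd_def)
      then show False using only_w w by force
    qed
    then show ?thesis using \<open>x \<notin> C\<close> w by simp
  next
    assume w: "w + 1 = x"
    have "x = b"
    proof (rule ccontr)
      assume "x \<noteq> b"
      then have "x + 1 \<in> {a..b}" "x \<in> ?N (x + 1)" using x_seg by (auto simp: seg_nbhd_def)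
      then show False using only_w w by force
    qed
    then show ?thesis using \<open>x \<notin> C\<close> w by simp
  qed
qed

lemma ex_legal_ordering_singleton: "(\<exists>vs. legal_ordering C a a vs) \<longleftrightarrow> a \<in> C"
proof
  assume "\<exists>vs. legal_ordering C a a vs"
  then obtain vs where "set vs = {a}" "legal_from (seg_nbhd C a a) {} vs"
    by (auto simp: legal_ordering_def)
  then have "seg_nbhd C a a a \<noteq> {}" by (cases vs) auto
  then show "a \<in> C" by (auto simp: seg_nbhd_def)
next
  assume "a \<in> C"
  then have "legal_ordering C a a [a]" by (auto simp: legal_ordering_def seg_nbhd_def)
  then show "\<exists>vs. legal_ordering C a a vs" ..
qed

lemma ex_legal_ordering_pair: "(\<exists>vs. legal_ordering C a (a + 1) vs) \<longleftrightarrow> \<not> {a, a + 1} \<subseteq> C"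
proof
  assume "\<exists>vs. legal_ordering C a (a + 1) vs"
  then obtain vs where vs: "legal_ordering C a (a + 1) vs" ..
  then have "vs \<noteq> []" by (auto simp: legal_ordering_def)
  then obtain ws w where "vs = ws @ [w]" by (cases vs rule: rev_exhaust) auto
  then show "\<not> {a, a + 1} \<subseteq> C" using legal_ordering_last vs by fastforce
next
  assume "\<not> {a, a + 1} \<subseteq> C"
  let ?N = "seg_nbhd C a (a + 1)"
  have "a + 1 \<in> ?N a" "a \<in> ?N (a + 1)" by (auto simp: seg_nbhd_def)
  moreover have "a \<notin> ?N a \<or> a + 1 \<notin> ?N (a + 1)"
    using \<open>\<not> {a, a + 1} \<subseteq> C\<close> by (auto simp: seg_nbhd_def)
  ultimately have "legal_ordering C a (a + 1) [a, a + 1] \<or> legal_ordering C a (a + 1) [a + 1, a]"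
    by (auto simp: legal_ordering_def)
  then show "\<exists>vs. legal_ordering C a (a + 1) vs" by blast
qed

lemma ex_legal_ordering_step:
  assumes "a + 2 \<le> b"
  shows "(\<exists>vs. legal_ordering C a b vs) \<longleftrightarrow>
           (a \<notin> C \<and> (\<exists>vs. legal_ordering C (a + 2) b vs)) \<or>
           (b \<notin> C \<and> (\<exists>vs. legal_ordering C a (b - 2) vs))"
proof
  assume "\<exists>vs. legal_ordering C a b vs"
  then obtain vs where vs: "legal_ordering C a b vs" ..
  then have "vs \<noteq> []" using assms by (auto simp: legal_ordering_def)
  then obtain ws w where "vs = ws @ [w]" by (cases vs rule: rev_exhaust) auto
  then show "(a \<notin> C \<and> (\<exists>vs. legal_ordering C (a + 2) b vs)) \<or>
             (b \<notin> C \<and> (\<exists>vs. legal_ordering C a (b - 2) vs))"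
    using legal_ordering_last[of C a b ws w] legal_ordering_peel_left[of C a b ws]
      legal_ordering_peel_right[of C a b ws] vs assms
    by (auto simp flip: diff_Suc_1)
next
  assume "(a \<notin> C \<and> (\<exists>vs. legal_ordering C (a + 2) b vs)) \<or>
          (b \<notin> C \<and> (\<exists>vs. legal_ordering C a (b - 2) vs))"
  then show "\<exists>vs. legal_ordering C a b vs"
    using legal_ordering_extend_left legal_ordering_extend_right assms by blast
qed

lemma good_config_step:
  assumes "a + 2 \<le> b"
  shows "good_config C a (Suc b - a) \<longleftrightarrow>
           (a \<notin> C \<and> good_config C (a + 2) (Suc b - (a + 2))) \<or>
           (b \<notin> C \<and> good_config C a (Suc (b - 2) - a))"
proof -
  obtain k where b: "b = a + k + 2" using assms le_Suc_ex by (metis add.assoc add.commute)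
  then have lengths: "Suc b - a = Suc (Suc (Suc k))" "Suc b - (a + 2) = Suc k" "Suc (b - 2) - a = Suc k"
    by simp_all
  show ?thesis unfolding lengths good_config.simps using b by simp
qed

lemma good_config_iff_ex_legal_ordering:
  "a \<le> b \<Longrightarrow> good_config C a (Suc b - a) \<longleftrightarrow> (\<exists>vs. legal_ordering C a b vs)"
proof (induction "b - a" arbitrary: a b rule: less_induct)
  case less
  consider "b = a" | "b = a + 1" | "a + 2 \<le> b" using less.prems by linarith
  then show ?case
  proof cases
    case 1
    then show ?thesis by (simp add: ex_legal_ordering_singleton)
  next
    case 2
    then show ?thesis using ex_legal_ordering_pair[of C a] by (simp add: numeral_2_eq_2)
  next
    case 3
    have "good_config C (a + 2) (Suc b - (a + 2)) \<longleftrightarrow> (\<exists>vs. legal_ordering C (a + 2) b vs)"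
      using 3 by (intro less.hyps) auto
    moreover have "good_config C a (Suc (b - 2) - a) \<longleftrightarrow> (\<exists>vs. legal_ordering C a (b - 2) vs)"
      using 3 by (intro less.hyps) auto
    ultimately show ?thesis
      unfolding good_config_step[OF 3] ex_legal_ordering_step[OF 3] by blast
  qed
qed

section \<open>The Grundy domination number of the path\<close>

lemma cnbhd_sym: "u \<in> cnbhd n C v \<longleftrightarrow> v \<in> cnbhd n C u"
  by (auto simp: cnbhd_def open_nbhd_def path_adj_def)

lemma cnbhd_subset: "C \<subseteq> path_verts n \<Longrightarrow> cnbhd n C v \<subseteq> path_verts n"
  by (auto simp: cnbhd_def open_nbhd_def path_adj_def path_verts_def)

lemma path_verts_dominated:
  assumes "\<forall>v\<in>path_verts n. cnbhd n C v \<noteq> {}" "C \<subseteq> path_verts n"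
  shows "path_verts n \<subseteq> \<Union>(cnbhd n C ` path_verts n)"
proof
  fix y assume y: "y \<in> path_verts n"
  then obtain z where z: "z \<in> cnbhd n C y" using assms(1) by blast
  then have "y \<in> cnbhd n C z" by (simp add: cnbhd_sym)
  moreover have "z \<in> path_verts n" using z cnbhd_subset[OF assms(2)] by blast
  ultimately show "y \<in> \<Union>(cnbhd n C ` path_verts n)" by blast
qed

lemma legal_seq_iff_legal_from:
  assumes "\<forall>v\<in>path_verts n. cnbhd n C v \<noteq> {}"
  shows "legal_seq n C vs \<longleftrightarrow> set vs \<subseteq> path_verts n \<and> legal_from (cnbhd n C) {} vs"
proof (cases "set vs \<subseteq> path_verts n")
  case True
  let ?fresh = "\<lambda>i. cnbhd n C (vs ! i) - (\<Union>j<i. cnbhd n C (vs ! j)) \<noteq> {}"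
  have "?fresh 0" if "0 < length vs"
    using assms True nth_mem[OF that] by auto
  then have "(\<forall>i. 1 \<le> i \<and> i < length vs \<longrightarrow> ?fresh i) \<longleftrightarrow> (\<forall>i < length vs. ?fresh i)"
    by (metis One_nat_def Suc_leI neq0_conv)
  also have "\<dots> \<longleftrightarrow> legal_from (cnbhd n C) {} vs"
    by (simp add: legal_from_conv_nth)
  finally show ?thesis
    using True legal_from_distinct[of "cnbhd n C" "{}" vs] by (auto simp: legal_seq_def)
qed (simp add: legal_seq_def)

lemma dominating_seq_iff:
  assumes "C \<subseteq> path_verts n"
  shows "dominating_seq n C vs \<longleftrightarrow> path_verts n \<subseteq> \<Union>(cnbhd n C ` set vs)"
proof -
  have "\<Union>(cnbhd n C ` set vs) \<subseteq> path_verts n" using cnbhd_subset[OF assms] by blast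
  then show ?thesis unfolding dominating_seq_def by blast
qed

lemma legal_seq_length_le:
  assumes "legal_seq n C vs"
  shows "length vs \<le> n"
proof -
  have "length vs = card (set vs)"
    using assms by (simp add: legal_seq_def distinct_card)
  also have "\<dots> \<le> card (path_verts n)"
    using assms by (intro card_mono) (auto simp: legal_seq_def path_verts_def)
  finally show ?thesis by (simp add: path_verts_def)
qed

lemma legal_seq_length_bound:
  assumes "\<forall>v\<in>path_verts n. cnbhd n C v \<noteq> {}" "C \<subseteq> path_verts n"
    and "legal_seq n C (v # vs)"
  shows "card (cnbhd n C v) + length vs \<le> n"
proof -
  let ?N = "cnbhd n C"
  have fin: "finite (?N u)" for u
    using finite_subset[OF cnbhd_subset[OF assms(2)]] by (simp add: path_verts_def)
  have "legal_from ?N (?N v) vs" using assms(1,3) by (simp add: legal_seq_iff_legal_from)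
  then have "card (?N v) + length vs \<le> card (?N v \<union> \<Union>(?N ` set vs))"
    using fin by (intro legal_from_card) auto
  also have "\<dots> \<le> card (path_verts n)"
    using cnbhd_subset[OF assms(2)] by (intro card_mono) (auto simp: path_verts_def)
  finally show ?thesis by (simp add: path_verts_def)
qed

lemma legal_from_extend_dominating:
  assumes "finite V" "V \<subseteq> \<Union>(N ` V)" "legal_from N {} xs" "set xs \<subseteq> V"
  shows "\<exists>ys. legal_from N {} (xs @ ys) \<and> set ys \<subseteq> V \<and> V \<subseteq> \<Union>(N ` set (xs @ ys))"
  using assms(3,4)
proof (induction "card (V - \<Union>(N ` set xs))" arbitrary: xs rule: less_induct)
  case less
  show ?case
  proof (cases "V \<subseteq> \<Union>(N ` set xs)")
    case True
    then show ?thesis using less.prems by (intro exI[of _ "[]"]) simp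
  next
    case False
    then obtain y where y: "y \<in> V" "y \<notin> \<Union>(N ` set xs)" by blast
    then obtain u where u: "u \<in> V" "y \<in> N u" using assms(2) by blast
    have "V - \<Union>(N ` set (xs @ [u])) \<subset> V - \<Union>(N ` set xs)" using y u by auto
    then have "card (V - \<Union>(N ` set (xs @ [u]))) < card (V - \<Union>(N ` set xs))"
      using assms(1) by (simp add: psubset_card_mono)
    moreover have "legal_from N {} (xs @ [u])" using less.prems(1) y u by (auto simp: legal_from_append)
    moreover have "set (xs @ [u]) \<subseteq> V" using less.prems(2) u by simp
    ultimately have "\<exists>ys. legal_from N {} ((xs @ [u]) @ ys) \<and> set ys \<subseteq> V \<and>
                       V \<subseteq> \<Union>(N ` set ((xs @ [u]) @ ys))"
      by (rule less.hyps)
    then obtain ys where "legal_from N {} ((xs @ [u]) @ ys)" "set ys \<subseteq> V"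
      "V \<subseteq> \<Union>(N ` set ((xs @ [u]) @ ys))" by blast
    then show ?thesis using u by (intro exI[of _ "u # ys"]) simp
  qed
qed

lemma legal_from_upt: "m \<le> n \<Longrightarrow> legal_from (cnbhd n C) {} [1..<m]"
proof (induction m)
  case (Suc m)
  show ?case
  proof (cases "m = 0")
    case False
    have "Suc m \<in> cnbhd n C m"
      using Suc.prems False by (simp add: cnbhd_def open_nbhd_def path_adj_def)
    moreover have "Suc m \<notin> cnbhd n C j" if "j < m" for j
      using that by (auto simp: cnbhd_def open_nbhd_def path_adj_def)
    ultimately have "\<not> cnbhd n C m \<subseteq> \<Union>(cnbhd n C ` set [1..<m])" by fastforce
    then show ?thesis using Suc False by (simp add: legal_from_append)
  qed simp
qed simp

lemma exists_legal_dominating_seq: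
  assumes "\<forall>v\<in>path_verts n. cnbhd n C v \<noteq> {}" "C \<subseteq> path_verts n"
  shows "\<exists>vs. legal_seq n C vs \<and> dominating_seq n C vs \<and> n - 1 \<le> length vs"
proof -
  let ?N = "cnbhd n C"
  have "legal_from ?N {} [1..<n]" by (rule legal_from_upt) simp
  moreover have "set [1..<n] \<subseteq> path_verts n" by (auto simp: path_verts_def)
  ultimately obtain ys where ys: "legal_from ?N {} ([1..<n] @ ys)" "set ys \<subseteq> path_verts n"
    "path_verts n \<subseteq> \<Union>(?N ` set ([1..<n] @ ys))"
    using legal_from_extend_dominating[of "path_verts n" ?N "[1..<n]"] path_verts_dominated[OF assms]
    by (auto simp: path_verts_def)
  then have "legal_seq n C ([1..<n] @ ys) \<and> dominating_seq n C ([1..<n] @ ys)"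
    using assms by (auto simp: legal_seq_iff_legal_from dominating_seq_iff path_verts_def)
  then show ?thesis by force
qed

lemma finite_legal_dominating_lengths:
  "finite {length vs | vs. legal_seq n C vs \<and> dominating_seq n C vs}"
  by (rule finite_subset[of _ "{..n}"]) (auto dest: legal_seq_length_le)

lemma gamma_gr_ge:
  "legal_seq n C vs \<Longrightarrow> dominating_seq n C vs \<Longrightarrow> length vs \<le> gamma_gr n C"
  unfolding gamma_gr_def by (rule Max_ge[OF finite_legal_dominating_lengths]) blast

lemma gamma_gr_attained:
  assumes "legal_seq n C vs" "dominating_seq n C vs"
  shows "\<exists>ws. legal_seq n C ws \<and> dominating_seq n C ws \<and> length ws = gamma_gr n C"
proof -
  have "gamma_gr n C \<in> {length vs | vs. legal_seq n C vs \<and> dominating_seq n C vs}"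
    unfolding gamma_gr_def using assms by (intro Max_in[OF finite_legal_dominating_lengths]) blast
  then show ?thesis by auto
qed

lemma gamma_gr_lower_bound:
  assumes "\<forall>v\<in>path_verts n. cnbhd n C v \<noteq> {}" "C \<subseteq> path_verts n"
  shows "n - 1 \<le> gamma_gr n C"
  using exists_legal_dominating_seq[OF assms] gamma_gr_ge by fastforce

lemma gamma_gr_upper_bound:
  assumes "\<forall>v\<in>path_verts n. cnbhd n C v \<noteq> {}" "C \<subseteq> path_verts n" "n \<ge> 1"
    and "\<And>v. v \<in> path_verts n \<Longrightarrow> d \<le> card (cnbhd n C v)"
  shows "gamma_gr n C + d \<le> n + 1"
proof -
  obtain vs where vs: "legal_seq n C vs" "dominating_seq n C vs" "length vs = gamma_gr n C"
    using exists_legal_dominating_seq[OF assms(1,2)] gamma_gr_attained by metis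
  have "vs \<noteq> []" using vs(2) assms(3) by (auto simp: dominating_seq_def path_verts_def)
  then obtain v ws where vws: "vs = v # ws" by (cases vs) auto
  then have "v \<in> path_verts n" using vs(1) by (simp add: legal_seq_def)
  then show ?thesis
    using legal_seq_length_bound[OF assms(1,2)] vs vws assms(4)[of v] by fastforce
qed

lemma legal_ordering_iff_legal_seq:
  assumes "\<forall>v\<in>path_verts n. cnbhd n C v \<noteq> {}" "C \<subseteq> path_verts n"
  shows "legal_ordering C 1 n vs \<longleftrightarrow> legal_seq n C vs \<and> length vs = n"
proof (cases "set vs \<subseteq> path_verts n \<and> distinct vs")
  case True
  then have "legal_from (seg_nbhd C 1 n) {} vs \<longleftrightarrow> legal_from (cnbhd n C) {} vs"
    using assms(2) by (intro legal_from_cong) (auto simp: cnbhd_eq_seg_nbhd path_verts_def)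
  moreover have "set vs = {1..n} \<longleftrightarrow> length vs = n"
    using True by (metis card_atLeastAtMost card_subset_eq distinct_card finite_atLeastAtMost
        diff_Suc_1 path_verts_def)
  ultimately show ?thesis
    using True assms(1) by (auto simp: legal_ordering_def legal_seq_iff_legal_from path_verts_def)
next
  case False
  then show ?thesis
    using legal_ordering_distinct by (auto simp: legal_ordering_def legal_seq_def path_verts_def)
qed

lemma gamma_gr_eq_iff_good_config:
  assumes "\<forall>v\<in>path_verts n. cnbhd n C v \<noteq> {}" "C \<subseteq> path_verts n" "n \<ge> 1"
  shows "gamma_gr n C = n \<longleftrightarrow> good_config C 1 n"
proof -
  have "good_config C 1 n \<longleftrightarrow> (\<exists>vs. legal_ordering C 1 n vs)"
    using good_config_iff_ex_legal_ordering[of 1 n C] assms(3) by simp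
  also have "\<dots> \<longleftrightarrow> (\<exists>vs. legal_seq n C vs \<and> length vs = n)"
    by (simp only: legal_ordering_iff_legal_seq[OF assms(1,2)])
  also have "\<dots> \<longleftrightarrow> gamma_gr n C = n"
  proof
    assume "\<exists>vs. legal_seq n C vs \<and> length vs = n"
    then obtain vs where vs: "legal_seq n C vs" "length vs = n" by blast
    then have "legal_ordering C 1 n vs" using legal_ordering_iff_legal_seq[OF assms(1,2)] by blast
    then have "set vs = path_verts n" by (simp add: legal_ordering_def path_verts_def)
    then have "dominating_seq n C vs"
      using path_verts_dominated[OF assms(1,2)] dominating_seq_iff[OF assms(2)] by simp
    then obtain ws where "legal_seq n C ws" "length ws = gamma_gr n C"
      using gamma_gr_attained vs(1) by blast
    then show "gamma_gr n C = n"
      using gamma_gr_ge[OF vs(1) \<open>dominating_seq n C vs\<close>] vs(2) legal_seq_length_le by fastforce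
  next
    assume "gamma_gr n C = n"
    then show "\<exists>vs. legal_seq n C vs \<and> length vs = n"
      using exists_legal_dominating_seq[OF assms(1,2)] gamma_gr_attained by metis
  qed
  finally show ?thesis ..
qed

lemma Min_card_cnbhd_eqI:
  assumes "\<And>v. v \<in> path_verts n \<Longrightarrow> d \<le> card (cnbhd n C v)"
    and "u \<in> path_verts n" "card (cnbhd n C u) = d"
  shows "Min {card (cnbhd n C v) | v. v \<in> path_verts n} = d"
  using assms by (intro Min_eqI) (auto simp: Setcompr_eq_image path_verts_def)

lemma card_cnbhd_ge_1:
  assumes "\<forall>v\<in>path_verts n. cnbhd n C v \<noteq> {}" "C \<subseteq> path_verts n" "v \<in> path_verts n"
  shows "1 \<le> card (cnbhd n C v)"
  using assms finite_subset[OF cnbhd_subset[OF assms(2)]]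
  by (simp add: Suc_le_eq card_gt_0_iff path_verts_def)

lemma card_cnbhd_ge_2:
  assumes "{1, n} \<subseteq> C" "2 \<le> n" "v \<in> path_verts n" "C \<subseteq> path_verts n"
  shows "2 \<le> card (cnbhd n C v)"
proof -
  obtain p q where pq: "p \<noteq> q" "{p, q} \<subseteq> cnbhd n C v"
  proof (cases "v \<in> C")
    case True
    show ?thesis
      using assms(2,3) True
      by (intro that[of v "if v < n then v + 1 else v - 1"])
         (auto simp: cnbhd_def open_nbhd_def path_adj_def path_verts_def)
  next
    case False
    then have "1 < v" "v < n" using assms(1,3) by (auto simp: path_verts_def le_less)
    then show ?thesis
      by (intro that[of "v - 1" "v + 1"]) (auto simp: cnbhd_def open_nbhd_def path_adj_def)
  qed
  have "finite (cnbhd n C v)"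
    using finite_subset[OF cnbhd_subset[OF assms(4)]] by (simp add: path_verts_def)
  then have "card {p, q} \<le> card (cnbhd n C v)" using pq(2) by (intro card_mono)
  then show ?thesis using pq(1) by simp
qed

lemma Min_card_cnbhd:
  assumes "\<forall>v\<in>path_verts n. cnbhd n C v \<noteq> {}" "C \<subseteq> path_verts n" "n \<ge> 1"
  shows "Min {card (cnbhd n C v) | v. v \<in> path_verts n} =
           (if {1, n} \<subseteq> C \<and> 2 \<le> n then 2 else 1)"
proof (cases "{1, n} \<subseteq> C \<and> 2 \<le> n")
  case True
  have "cnbhd n C 1 = {1, 2}" using True by (auto simp: cnbhd_def open_nbhd_def path_adj_def)
  then show ?thesis
    using True assms(2) card_cnbhd_ge_2
    by (simp, intro Min_card_cnbhd_eqI[of n _ _ 1]) (auto simp: path_verts_def)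
next
  case False
  obtain e where "e \<in> path_verts n" "card (cnbhd n C e) = 1"
  proof (cases "n = 1")
    case True
    then have "1 \<in> C" using assms(1) by (auto simp: cnbhd_def open_nbhd_def path_adj_def path_verts_def)
    then have "cnbhd n C 1 = {1}" using True by (auto simp: cnbhd_def open_nbhd_def path_adj_def)
    then show ?thesis using True that[of 1] by (simp add: path_verts_def)
  next
    case n: False
    then have "1 \<notin> C \<or> n \<notin> C" using False assms(3) by auto
    moreover have "1 \<notin> C \<Longrightarrow> cnbhd n C 1 = {2}" "n \<notin> C \<Longrightarrow> cnbhd n C n = {n - 1}"
      using n assms(3) by (auto simp: cnbhd_def open_nbhd_def path_adj_def)
    ultimately show ?thesis using that[of 1] that[of n] assms(3) by (auto simp: path_verts_def)
  qed
  then have "Min {card (cnbhd n C v) | v. v \<in> path_verts n} = 1"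
    using card_cnbhd_ge_1[OF assms(1,2)] by (intro Min_card_cnbhd_eqI)
  then show ?thesis using False by simp
qed

theorem proposition3:
  fixes n :: nat and C :: "nat set"
  assumes "n \<ge> 1"
    and "C \<subseteq> path_verts n"
    and "\<forall>v \<in> path_verts n - C. open_nbhd n v \<noteq> {}"
  shows "let \<delta>1 = Min {card (cnbhd n C v) | v. v \<in> path_verts n};
             m1 = n + 1 - \<delta>1
         in (if {1, n} \<subseteq> C \<or> good_config C 1 n
             then gamma_gr n C = m1 else gamma_gr n C = m1 - 1)"
proof -
  have nonempty: "\<forall>v\<in>path_verts n. cnbhd n C v \<noteq> {}"
    using assms(3) by (auto simp: cnbhd_def)
  define \<delta>1 where "\<delta>1 = Min {card (cnbhd n C v) | v. v \<in> path_verts n}"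
  have \<delta>1: "\<delta>1 = (if {1, n} \<subseteq> C \<and> 2 \<le> n then 2 else 1)"
    unfolding \<delta>1_def using Min_card_cnbhd[OF nonempty assms(2,1)] .
  have "\<delta>1 \<le> card (cnbhd n C v)" if "v \<in> path_verts n" for v
    using \<delta>1 card_cnbhd_ge_1[OF nonempty assms(2) that] card_cnbhd_ge_2[OF _ _ that assms(2)] by auto
  then have upper: "gamma_gr n C + \<delta>1 \<le> n + 1"
    by (rule gamma_gr_upper_bound[OF nonempty assms(2,1)])
  have lower: "n - 1 \<le> gamma_gr n C"
    by (rule gamma_gr_lower_bound[OF nonempty assms(2)])
  have "gamma_gr n C = n \<longleftrightarrow> good_config C 1 n"
    by (rule gamma_gr_eq_iff_good_config[OF nonempty assms(2,1)])
  moreover have "good_config C 1 n" if "{1, n} \<subseteq> C" "\<not> 2 \<le> n"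
  proof -
    have "n = 1" using that(2) assms(1) by simp
    then show ?thesis using that(1) by simp
  qed
  ultimately show ?thesis
    using upper lower \<delta>1 unfolding Let_def \<delta>1_def[symmetric] by auto
qed

end
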